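(* Let $m\ge1$ be an integer, $q$ a prime power, and consider ${\rm PG}(4m-3,q^2)$ equipped with the non-degenerate Hermitian polar space $\mathcal H(4m-3,q^2)$ obtained by field reduction as follows: take a non-degenerate Hermitian form $h$ on $V(2,q^{4m-2})$ (with respect to $x\mapsto x^{q^{2m-1}}$), regard $V(2,q^{4m-2})$ as a $(4m-2)$-dimensional vector space $\bar V$ over ${\rm GF}(q^2)$, and let $\mathcal H(4m-3,q^2)$ be defined by the form $\bar h={\rm Tr}_{q^{4m-2}|q^2}\circ h$, with associated unitary polarity $\rho$. Then there exists a $(2m-2)$-spread $\mathbf S$ of ${\rm PG}(4m-3,q^2)$ such that $q^{2m-1}+1$ members of $\mathbf S$ are generators of $\mathcal H(4m-3,q^2)$ and the remaining $q^{4m-2}-q^{2m-1}$ members occur in $(q^{4m-2}-q^{2m-1})/2$ pairs of the form $\{\Delta,\Delta^{\rho}\}$ with $\Delta\cap\Delta^{\rho}=\emptyset$.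
   Context: ${\rm Tr}_{q^{4m-2}|q^2}(x)=\sum_{i=0}^{2m-2}x^{q^{2i}}$. A $(2m-2)$-spread of ${\rm PG}(4m-3,q^2)$ is a set of pairwise disjoint $(2m-2)$-dimensional projective subspaces partitioning the point set. Generators of $\mathcal H(4m-3,q^2)$ are its totally isotropic subspaces of projective dimension $2m-2$. *)

theory Defs
  imports Main "HOL.Vector_Spaces" "HOL-Library.Product_Plus" "HOL-Computational_Algebra.Primes"
begin

text \<open>V(2,q^(4m-2)) is rendered as 'b * 'b for a finite field 'b of order q^(4m-2).
  GF(q^2) is a finite field 'a of order q^2, embedded into 'b by a field homomorphism emb.
  The GF(q^2)-vector space structure on 'b * 'b (the space written bar V in the paper)
  is given by the scalar multiplication sc.\<close>

definition bscale :: "'b::field \<Rightarrow> 'b \<times> 'b \<Rightarrow> 'b \<times> 'b" where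
  "bscale c v = (c * fst v, c * snd v)"

definition sc :: "('a::field \<Rightarrow> 'b::field) \<Rightarrow> 'a \<Rightarrow> 'b \<times> 'b \<Rightarrow> 'b \<times> 'b" where
  "sc emb a v = bscale (emb a) v"

definition field_embedding :: "('a::field \<Rightarrow> 'b::field) \<Rightarrow> bool" where
  "field_embedding emb \<longleftrightarrow> emb 1 = 1 \<and> (\<forall>x y. emb (x + y) = emb x + emb y)
      \<and> (\<forall>x y. emb (x * y) = emb x * emb y)"

definition hermitian_form :: "('b::field \<Rightarrow> 'b) \<Rightarrow> ('b \<times> 'b \<Rightarrow> 'b \<times> 'b \<Rightarrow> 'b) \<Rightarrow> bool" where
  "hermitian_form \<sigma> h \<longleftrightarrow>
     (\<forall>u v w. h (u + v) w = h u w + h v w) \<and>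
     (\<forall>c u v. h (bscale c u) v = c * h u v) \<and>
     (\<forall>u v. h v u = \<sigma> (h u v))"

definition nondegenerate :: "('v::zero \<Rightarrow> 'v \<Rightarrow> 'b::zero) \<Rightarrow> bool" where
  "nondegenerate h \<longleftrightarrow> (\<forall>u. (\<forall>v. h u v = 0) \<longrightarrow> u = 0)"

definition rel_trace :: "nat \<Rightarrow> nat \<Rightarrow> 'b::field \<Rightarrow> 'b" where
  "rel_trace q m x = (\<Sum>i\<in>{0..2*m-2}. x ^ (q ^ (2*i)))"

definition polar :: "('v \<Rightarrow> 'v \<Rightarrow> 'b::zero) \<Rightarrow> 'v set \<Rightarrow> 'v set" where
  "polar hb D = {v. \<forall>u\<in>D. hb u v = 0}"

definition proj_subspace :: "('a::field \<Rightarrow> 'v::ab_group_add \<Rightarrow> 'v) \<Rightarrow> nat \<Rightarrow> 'v set \<Rightarrow> bool" where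
  "proj_subspace s d W \<longleftrightarrow> module.subspace s W \<and> vector_space.dim s W = d + 1"

definition is_spread :: "('a::field \<Rightarrow> 'v::ab_group_add \<Rightarrow> 'v) \<Rightarrow> nat \<Rightarrow> 'v set set \<Rightarrow> bool" where
  "is_spread s d S \<longleftrightarrow> (\<forall>W\<in>S. proj_subspace s d W)
     \<and> (\<forall>W\<in>S. \<forall>W'\<in>S. W \<noteq> W' \<longrightarrow> W \<inter> W' = {0})
     \<and> \<Union>S = UNIV"

definition is_generator :: "('a::field \<Rightarrow> 'v::ab_group_add \<Rightarrow> 'v) \<Rightarrow> ('v \<Rightarrow> 'v \<Rightarrow> 'b::zero) \<Rightarrow> nat \<Rightarrow> 'v set \<Rightarrow> bool" where
  "is_generator s hb d W \<longleftrightarrow> proj_subspace s d W \<and> (\<forall>u\<in>W. \<forall>v\<in>W. hb u v = 0)"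

end

theory Submission
  imports Defs "HOL-Computational_Algebra.Polynomial"
begin

(* The spread is the Desarguesian spread: the points <v> of PG(1, K), K = GF(q^(4m-2)), each of
   which becomes a (2m-2)-space of PG(4m-3, q^2) under field reduction. Put Q = q^(2m-1), so that
   x |-> x^Q is the involution of K. Since the relative trace is not identically zero and the
   rho-polar of <v> only involves the K-multiples of the values h(v, u), the point <v> is a generator
   iff h(v, v) = 0, and its polar is the h-orthogonal point <v>^perp. So the generators in the
   spread are the Q + 1 isotropic points of h on PG(1, Q^2), counted by turning h(v, v) = 0 into a
   norm or a trace equation over GF(Q). Every other point P meets P^perp trivially and satisfies
   P^perp^perp = P, so the remaining Q^2 - Q points fall into the pairs {P, P^rho}. *)

lemma card_roots_power_plus_linear_le:
  fixes e c :: "'a::field"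
  assumes "n \<ge> 2"
  shows "card {x. x ^ n + e * x = c} \<le> n"
proof -
  define P where "P = monom 1 n + [:-c, e:]"
  have "coeff P n = 1"
    using assms by (simp add: P_def coeff_pCons split: nat.split)
  then have "P \<noteq> 0" by auto
  have "degree P \<le> n"
    unfolding P_def using assms by (intro degree_add_le) (auto simp: degree_monom_le)
  have "{x. x ^ n + e * x = c} = {x. poly P x = 0}"
    by (auto simp: P_def poly_monom algebra_simps)
  then show ?thesis
    using card_poly_roots_bound[OF \<open>P \<noteq> 0\<close>] \<open>degree P \<le> n\<close> by simp
qed

lemma card_fiber_eq_if_card_domain_eq:
  assumes "finite G" "finite B" "f ` G \<subseteq> B" "card B \<le> n" "card G = n * M"
    and fiber_le: "\<And>b. b \<in> B \<Longrightarrow> card {x\<in>G. f x = b} \<le> M"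
    and "b \<in> B"
  shows "card {x\<in>G. f x = b} = M"
proof -
  let ?fiber = "\<lambda>b. card {x\<in>G. f x = b}"
  have G: "G = (\<Union>b\<in>B. {x\<in>G. f x = b})"
    using assms(3) by auto
  have "card G = (\<Sum>b\<in>B. ?fiber b)"
    by (subst G, rule card_UN_disjoint) (use assms(1,2) in auto)
  also have "\<dots> = ?fiber b + (\<Sum>b\<in>B-{b}. ?fiber b)"
    using assms(2,7) by (simp add: sum.remove)
  also have "(\<Sum>b\<in>B-{b}. ?fiber b) \<le> (card B - 1) * M"
    using sum_mono[of "B-{b}" ?fiber "\<lambda>_. M"] fiber_le assms(2,7) by simp
  finally have "card G \<le> ?fiber b + (card B - 1) * M"
    by simp
  moreover have "(card B - 1) * M \<le> (n - 1) * M"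
    using assms(4) by (simp add: diff_le_mono)
  moreover have "n * M = M + (n - 1) * M"
    using assms(2,4,7) card_gt_0_iff[of B] by (cases n) auto
  ultimately have "M \<le> ?fiber b"
    using assms(5) by linarith
  then show ?thesis
    using fiber_le[OF assms(7)] by simp
qed

lemma card_pairs_of_involution:
  assumes "finite A" "\<And>x. x \<in> A \<Longrightarrow> f x \<in> A" "\<And>x. x \<in> A \<Longrightarrow> f x \<noteq> x"
    "\<And>x. x \<in> A \<Longrightarrow> f (f x) = x"
  shows "card {{x, f x} | x. x \<in> A} = card A div 2"
proof -
  let ?C = "{{x, f x} | x. x \<in> A}"
  have "\<Union>?C = A"
    using assms(2) by blast
  have "disjnt {x, f x} {y, f y}" if "x \<in> A" "y \<in> A" "{x, f x} \<noteq> {y, f y}" for x y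
  proof (rule ccontr)
    assume "\<not> disjnt {x, f x} {y, f y}"
    then have "x = y \<or> x = f y \<or> f x = y \<or> f x = f y"
      by (auto simp: disjnt_def)
    then have "{x, f x} = {y, f y}"
      using assms(4) that(1,2) by (metis insert_commute)
    with that(3) show False ..
  qed
  then have "pairwise disjnt ?C"
    unfolding pairwise_def by blast
  moreover have "card X = 2" if X: "X \<in> ?C" for X
  proof -
    obtain x where "x \<in> A" "X = {x, f x}"
      using X by blast
    then show ?thesis
      using assms(3)[of x] by (auto simp: card_insert_if)
  qed
  ultimately have "card (\<Union>?C) = (\<Sum>X\<in>?C. 2)"
    by (subst card_Union_disjoint) auto
  then show ?thesis
    using \<open>\<Union>?C = A\<close> by simp
qed

lemma card_Collect_affine:
  fixes d e :: "'a::field"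
  assumes "d \<noteq> 0"
  shows "card {t. P (d * t + e)} = card {s. P s}"
proof -
  have "{t. P (d * t + e)} = (\<lambda>s. (s - e) / d) ` {s. P s}"
    by (rule set_eqI, rule iffI, rule image_eqI[where x = "d * _ + e"]) (use assms in auto)
  moreover have "inj_on (\<lambda>s. (s - e) / d) {s. P s}"
    by (rule inj_onI) (use assms in simp)
  ultimately show ?thesis
    by (simp add: card_image)
qed

lemma linear_equation_solution:
  fixes a b x y :: "'a::field"
  assumes "a \<noteq> 0 \<or> b \<noteq> 0" "x * a + y * b = 0"
  obtains c where "x = c * b" "y = - (c * a)"
proof (cases "b = 0")
  case True
  then show ?thesis
    using assms that[of "- y / a"] by auto
next
  case False
  have "y * b = - (x * a)"
    using assms(2) by (simp add: eq_neg_iff_add_eq_0 add.commute)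
  then have "y = - (x / b * a)"
    using False by (simp add: field_simps)
  then show ?thesis
    using False by (intro that[of "x / b"]) simp_all
qed

context vector_space
begin

lemma card_span_independent:
  assumes "finite (span B)" "independent B"
  shows "card (span B) = card (UNIV :: 'a set) ^ card B"
proof -
  have "finite B"
    using assms(1) finite_subset span_superset by blast
  then show ?thesis
    using assms
  proof (induction B rule: finite_induct)
    case (insert b B)
    have B: "independent B" "b \<notin> span B" "finite (span B)"
      using insert.prems insert.hyps(2) span_mono[of B "insert b B"]
      by (auto simp: independent_insert intro: finite_subset)
    have span_insert_eq: "span (insert b B) = (\<lambda>(c, w). c *s b + w) ` (UNIV \<times> span B)"
    proof (intro set_eqI iffI)
      fix x assume "x \<in> span (insert b B)"
      then obtain c where "x - c *s b \<in> span B"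
        by (auto simp: span_insert)
      then show "x \<in> (\<lambda>(c, w). c *s b + w) ` (UNIV \<times> span B)"
        by (intro image_eqI[of _ _ "(c, x - c *s b)"]) auto
    next
      fix x assume "x \<in> (\<lambda>(c, w). c *s b + w) ` (UNIV \<times> span B)"
      then obtain c w where "w \<in> span B" "x = c *s b + w"
        by auto
      then show "x \<in> span (insert b B)"
        unfolding span_insert by (intro CollectI exI[of _ c]) simp
    qed
    have "inj_on (\<lambda>(c, w). c *s b + w) (UNIV \<times> span B)"
    proof (rule inj_onI, clarsimp)
      fix c w c' w' assume w: "w \<in> span B" "w' \<in> span B" and "c *s b + w = c' *s b + w'"
      then have "(c - c') *s b \<in> span B"
        by (metis add_diff_cancel_left' add_diff_eq diff_add_cancel scale_left_diff_distrib span_diff)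
      then have "c = c'"
        using B(2) span_scale[of "(c - c') *s b" B "inverse (c - c')"]
        by (metis eq_iff_diff_eq_0 left_inverse scale_one scale_scale)
      then show "c = c' \<and> w = w'"
        using \<open>c *s b + w = c' *s b + w'\<close> by simp
    qed
    then have "card (span (insert b B)) = card (UNIV :: 'a set) * card (span B)"
      by (simp add: span_insert_eq card_image card_cartesian_product)
    then show ?case
      using insert.IH[OF B(3,1)] insert.hyps by simp
  qed simp
qed

lemma card_subspace:
  assumes "finite W" "subspace W"
  shows "card W = card (UNIV :: 'a set) ^ dim W"
proof -
  obtain B where B: "B \<subseteq> W" "independent B" "W \<subseteq> span B" "card B = dim W"
    by (rule basis_exists[of W])
  then have "span B = W"
    using assms(2) span_minimal by blast
  then show ?thesis
    using card_span_independent[of B] assms(1) B by simp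
qed

end

section \<open>Finite fields and the relative trace\<close>

lemma CHAR_eq_if_card_prime_power:
  assumes "prime p" "card (UNIV :: 'a::{field,finite} set) = p ^ n"
  shows "CHAR('a) = p"
proof -
  have "CHAR('a) > 0"
    by (simp add: finite_imp_CHAR_pos)
  then have "prime CHAR('a)"
    by (rule prime_CHAR_semidom)
  have "(\<Sum>y\<in>(UNIV::'a set). y + 1) = (\<Sum>y\<in>UNIV. y)"
    by (rule sum.reindex_bij_witness[of _ "\<lambda>y. y - 1" "\<lambda>y. y + 1"]) auto
  then have "of_nat (card (UNIV::'a set)) = (0::'a)"
    by (simp add: sum.distrib)
  then have "CHAR('a) dvd p ^ n"
    using of_nat_eq_0_iff_char_dvd assms(2) by metis
  then show ?thesis
    using \<open>prime CHAR('a)\<close> assms(1) prime_dvd_power primes_dvd_imp_eq by blast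
qed

lemma power_prime_power_add:
  assumes "prime p" "card (UNIV :: 'a::{field,finite} set) = p ^ n"
  shows "((x::'a) + y) ^ (p ^ j) = x ^ (p ^ j) + y ^ (p ^ j)"
  using freshmans_dream'[of "p ^ j" j x y] CHAR_eq_if_card_prime_power[OF assms] assms(1) by simp

lemma rel_trace_0: "q \<noteq> 0 \<Longrightarrow> rel_trace q m (0::'a::field) = 0"
  by (simp add: rel_trace_def power_0_left)

lemma rel_trace_nonzero:
  assumes "q \<ge> 2" "m \<ge> 1" "card (UNIV :: 'a::{field,finite} set) = q ^ (4*m - 2)"
  shows "\<exists>z::'a. rel_trace q m z \<noteq> 0"
proof -
  define N where "N = q ^ (2 * (2*m - 2))"
  define P where "P = (\<Sum>i\<in>{0..2*m-2}. monom (1::'a) (q ^ (2 * i)))"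
  have poly_P: "poly P z = rel_trace q m z" for z
    by (simp add: P_def rel_trace_def poly_sum poly_monom)
  have "coeff P N = (\<Sum>i\<in>{0..2*m-2}. if i = 2*m-2 then 1 else 0)"
    unfolding P_def coeff_sum coeff_monom N_def
    by (rule sum.cong) (use assms(1) in simp_all)
  then have "P \<noteq> 0"
    by auto
  have "degree P \<le> N"
  proof (rule degree_le, intro allI impI)
    fix j assume "N < j"
    have "q ^ (2 * i) \<le> N" if "i \<in> {0..2*m-2}" for i
      unfolding N_def using that assms(1) by (intro power_increasing) auto
    then show "coeff P j = 0"
      unfolding P_def coeff_sum coeff_monom using \<open>N < j\<close> by (intro sum.neutral) fastforce
  qed
  moreover have "N < card (UNIV :: 'a set)"
    unfolding N_def assms(3) using assms(1,2) by (intro power_strict_increasing) auto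
  ultimately have "card {z. poly P z = 0} < card (UNIV :: 'a set)"
    using card_poly_roots_bound[OF \<open>P \<noteq> 0\<close>] by linarith
  then obtain z where "poly P z \<noteq> 0"
    by (metis (mono_tags) UNIV_eq_I mem_Collect_eq nat_less_le)
  then show ?thesis
    using poly_P by auto
qed

section \<open>The Desarguesian spread\<close>

lemma bscale_Pair [simp]: "bscale c (x, y) = (c * x, c * y)"
  by (simp add: bscale_def)

lemma Pair_eq_0_iff [simp]: "(x, y) = 0 \<longleftrightarrow> x = 0 \<and> y = 0"
  by (simp add: zero_prod_def)

lemma bscale_bscale: "bscale c (bscale d v) = bscale (c * d) v"
  by (simp add: bscale_def mult.assoc)

lemma bscale_1 [simp]: "bscale 1 v = v"
  by (simp add: bscale_def)

lemma bscale_eq_0_iff: "bscale c v = 0 \<longleftrightarrow> c = 0 \<or> v = 0"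
  by (cases v) auto

lemma vector_space_sc: "field_embedding emb \<Longrightarrow> vector_space (sc emb)"
  by unfold_locales (auto simp: field_embedding_def sc_def bscale_def algebra_simps)

text \<open>\<open>kpoint v\<close> is the point \<open>\<langle>v\<rangle>\<close> of PG(1, K) as a set of vectors of \<open>K \<times> K\<close>; under the
  scalar multiplication \<open>sc emb\<close> it is a subspace of the field-reduced space.\<close>

definition kpoint :: "'b::field \<times> 'b \<Rightarrow> ('b \<times> 'b) set" where
  "kpoint v = range (\<lambda>c. bscale c v)"

definition desarguesian_spread :: "('b::field \<times> 'b) set set" where
  "desarguesian_spread = kpoint ` (UNIV - {0})"

lemma mem_kpoint_iff: "u \<in> kpoint v \<longleftrightarrow> (\<exists>c. u = bscale c v)"
  by (auto simp: kpoint_def)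

lemma zero_in_kpoint [simp]: "0 \<in> kpoint v"
  unfolding mem_kpoint_iff by (auto intro: exI[of _ 0] simp: bscale_def)

lemma self_in_kpoint [simp]: "v \<in> kpoint v"
  unfolding mem_kpoint_iff by (auto intro: exI[of _ 1] simp: bscale_def)

lemma kpoint_bscale_subset: "kpoint (bscale c v) \<subseteq> kpoint v"
  by (auto simp: mem_kpoint_iff bscale_bscale)

lemma kpoint_eq_if_mem:
  assumes "u \<noteq> 0" "u \<in> kpoint v"
  shows "kpoint u = kpoint v"
proof -
  obtain c where c: "u = bscale c v"
    using assms(2) by (auto simp: mem_kpoint_iff)
  with assms(1) have "c \<noteq> 0"
    by (auto simp: bscale_eq_0_iff)
  with c have "v = bscale (inverse c) u"
    by (simp add: bscale_bscale)
  then show ?thesis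
    using c kpoint_bscale_subset by (metis subset_antisym)
qed

lemma kpoint_inter_kpoint:
  assumes "kpoint v \<noteq> kpoint w"
  shows "kpoint v \<inter> kpoint w = {0}"
proof -
  have "u = 0" if "u \<in> kpoint v" "u \<in> kpoint w" for u
    using that assms kpoint_eq_if_mem by metis
  then show ?thesis
    using zero_in_kpoint by blast
qed

lemma card_kpoint:
  assumes "(v::'b::{field,finite} \<times> 'b) \<noteq> 0"
  shows "card (kpoint v) = card (UNIV :: 'b set)"
proof -
  have "inj (\<lambda>c. bscale c v)"
    using assms by (cases v) (auto intro!: injI)
  then show ?thesis
    unfolding kpoint_def by (simp add: card_image)
qed

lemma subspace_kpoint:
  assumes "field_embedding emb"
  shows "module.subspace (sc emb) (kpoint v)"
proof -
  interpret vector_space "sc emb"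
    using assms by (rule vector_space_sc)
  have add: "bscale c v + bscale d v = bscale (c + d) v" for c d
    by (simp add: bscale_def algebra_simps)
  have scale: "sc emb a (bscale c v) = bscale (emb a * c) v" for a c
    by (simp add: sc_def bscale_bscale)
  show ?thesis
    unfolding subspace_def
  proof (intro conjI ballI allI)
    fix x y assume "x \<in> kpoint v" "y \<in> kpoint v"
    then show "x + y \<in> kpoint v"
      unfolding mem_kpoint_iff using add by blast
  next
    fix a x assume "x \<in> kpoint v"
    then show "sc emb a x \<in> kpoint v"
      unfolding mem_kpoint_iff using scale by blast
  qed simp
qed

lemma proj_subspace_kpoint:
  fixes emb :: "'a::{field,finite} \<Rightarrow> 'b::{field,finite}"
  assumes "field_embedding emb" "card (UNIV :: 'b set) = card (UNIV :: 'a set) ^ (d + 1)" "v \<noteq> 0"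
  shows "proj_subspace (sc emb) d (kpoint v)"
proof -
  interpret vector_space "sc emb"
    using assms(1) by (rule vector_space_sc)
  have "card (UNIV :: 'a set) ^ dim (kpoint v) = card (UNIV :: 'a set) ^ (d + 1)"
    using card_subspace[OF _ subspace_kpoint[OF assms(1)]] card_kpoint[OF assms(3)] assms(2)
    by simp
  moreover have "1 < card (UNIV :: 'a set)"
    using card_mono[of UNIV "{0::'a, 1}"] by simp
  ultimately show ?thesis
    unfolding proj_subspace_def using subspace_kpoint[OF assms(1)] power_inject_exp by blast
qed

lemma is_spread_desarguesian_spread:
  fixes emb :: "'a::{field,finite} \<Rightarrow> 'b::{field,finite}"
  assumes "field_embedding emb" "card (UNIV :: 'b set) = card (UNIV :: 'a set) ^ (d + 1)"
  shows "is_spread (sc emb) d desarguesian_spread"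
  unfolding is_spread_def
proof (intro conjI ballI impI)
  show "proj_subspace (sc emb) d W" if "W \<in> desarguesian_spread" for W
    using that proj_subspace_kpoint[OF assms] by (auto simp: desarguesian_spread_def)
  show "W \<inter> W' = {0}" if "W \<in> desarguesian_spread" "W' \<in> desarguesian_spread" "W \<noteq> W'"
    for W W' :: "('b \<times> 'b) set"
    using that kpoint_inter_kpoint unfolding desarguesian_spread_def by blast
  have "u \<in> \<Union> desarguesian_spread" for u :: "'b \<times> 'b"
  proof -
    have "kpoint (if u = 0 then (1, 0) else u) \<in> desarguesian_spread"
      by (simp add: desarguesian_spread_def)
    moreover have "u \<in> kpoint (if u = 0 then (1, 0) else u)"
      by simp
    ultimately show ?thesis
      by blast
  qed
  then show "\<Union> (desarguesian_spread :: ('b \<times> 'b) set set) = UNIV"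
    by blast
qed

lemma desarguesian_spread_eq:
  "desarguesian_spread = insert (kpoint (0, 1)) (range (\<lambda>t. kpoint (1::'b::field, t)))"
proof (intro set_eqI iffI)
  fix D :: "('b \<times> 'b) set"
  assume "D \<in> desarguesian_spread"
  then obtain x y where xy: "(x, y) \<noteq> 0" "D = kpoint (x, y)"
    unfolding desarguesian_spread_def by (metis DiffD2 imageE insertI1 surj_pair)
  show "D \<in> insert (kpoint (0, 1)) (range (\<lambda>t. kpoint (1, t)))"
  proof (cases "x = 0")
    case True
    with xy(1) have "(0, 1) = bscale (inverse y) (x, y)"
      by simp
    then have "(0, 1) \<in> kpoint (x, y)"
      unfolding mem_kpoint_iff by blast
    then have "kpoint (0, 1) = D"
      using xy(2) kpoint_eq_if_mem[of "(0, 1)"] by simp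
    then show ?thesis
      by simp
  next
    case False
    then have "(1, y / x) = bscale (inverse x) (x, y)"
      by (simp add: field_simps)
    then have "(1, y / x) \<in> kpoint (x, y)"
      unfolding mem_kpoint_iff by blast
    then have "kpoint (1, y / x) = D"
      using xy(2) kpoint_eq_if_mem[of "(1, y / x)"] by simp
    then show ?thesis
      by blast
  qed
qed (auto simp: desarguesian_spread_def)

lemma kpoint_0_1_notin_range: "kpoint (0, 1) \<notin> range (\<lambda>t. kpoint (1::'b::field, t))"
proof
  assume "kpoint (0, 1) \<in> range (\<lambda>t. kpoint (1::'b, t))"
  then obtain t where "(1, t) \<in> kpoint (0::'b, 1::'b)"
    by (metis rangeE self_in_kpoint)
  then show False
    by (auto simp: mem_kpoint_iff)
qed

lemma inj_kpoint_1: "inj (\<lambda>t. kpoint (1::'b::field, t))"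
proof (rule injI)
  fix s t :: 'b
  assume "kpoint (1, s) = kpoint (1, t)"
  then have "(1, s) \<in> kpoint (1, t)"
    by (metis self_in_kpoint)
  then show "s = t"
    by (auto simp: mem_kpoint_iff)
qed

lemma card_desarguesian_spread:
  "card (desarguesian_spread :: ('b::{field,finite} \<times> 'b) set set) = card (UNIV :: 'b set) + 1"
proof -
  have "card (range (\<lambda>t. kpoint (1::'b, t))) = card (UNIV :: 'b set)"
    by (rule card_image[OF inj_kpoint_1])
  moreover have "kpoint (0, 1::'b) \<notin> range (\<lambda>t. kpoint (1, t))"
    by (rule kpoint_0_1_notin_range)
  ultimately show ?thesis
    unfolding desarguesian_spread_eq by simp
qed

section \<open>Hermitian forms on a plane over GF(Q^2)\<close>

locale hermitian_plane =
  fixes Q :: nat and h :: "'b::{field,finite} \<times> 'b \<Rightarrow> 'b \<times> 'b \<Rightarrow> 'b"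
  assumes card_field: "card (UNIV :: 'b set) = Q * Q"
    and power_Q_add: "\<And>x y :: 'b. (x + y) ^ Q = x ^ Q + y ^ Q"
    and hermitian: "hermitian_form (\<lambda>x. x ^ Q) h"
    and nondegenerate: "nondegenerate h"
begin

definition \<sigma> :: "'b \<Rightarrow> 'b" where
  "\<sigma> x = x ^ Q"

lemma Q_ge_2: "2 \<le> Q"
proof -
  have "2 \<le> Q * Q"
    using card_mono[of UNIV "{0::'b, 1}"] card_field by simp
  then show ?thesis
    by (metis One_nat_def le_less_Suc_eq less_2_cases_iff mult_0_right mult_1_right not_le)
qed

lemma \<sigma>_add [simp]: "\<sigma> (x + y) = \<sigma> x + \<sigma> y"
  by (simp add: \<sigma>_def power_Q_add)

lemma \<sigma>_mult [simp]: "\<sigma> (x * y) = \<sigma> x * \<sigma> y"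
  by (simp add: \<sigma>_def power_mult_distrib)

lemma \<sigma>_0 [simp]: "\<sigma> 0 = 0"
  using Q_ge_2 by (simp add: \<sigma>_def)

lemma \<sigma>_1 [simp]: "\<sigma> 1 = 1"
  by (simp add: \<sigma>_def)

lemma \<sigma>_minus [simp]: "\<sigma> (- x) = - \<sigma> x"
  using \<sigma>_add[of "- x" x] by (simp add: eq_neg_iff_add_eq_0)

lemma \<sigma>_diff [simp]: "\<sigma> (x - y) = \<sigma> x - \<sigma> y"
  using \<sigma>_add[of x "- y"] by simp

lemma h_add_left: "h (u + v) w = h u w + h v w"
  using hermitian unfolding hermitian_form_def by blast

lemma h_scale_left: "h (bscale c u) v = c * h u v"
  using hermitian unfolding hermitian_form_def by blast

lemma h_swap: "h v u = \<sigma> (h u v)"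
  using hermitian unfolding hermitian_form_def \<sigma>_def by blast

lemma h_add_right: "h w (u + v) = h w u + h w v"
  by (metis \<sigma>_add h_add_left h_swap)

lemma h_scale_right: "h u (bscale c v) = \<sigma> c * h u v"
  by (simp only: h_swap[of u "bscale c v"] h_swap[of u v] h_scale_left \<sigma>_mult)

lemma h_0_right [simp]: "h u 0 = 0"
  using h_scale_right[of u 0 u] by (simp add: bscale_def zero_prod_def)

text \<open>The involutivity of \<open>\<sigma>\<close> comes from the symmetry of \<open>h\<close>, since a nondegenerate \<open>h\<close>
  takes every value.\<close>

lemma \<sigma>_\<sigma> [simp]: "\<sigma> (\<sigma> x) = x"
proof -
  have "(1, 0) \<noteq> (0 :: 'b \<times> 'b)"
    by simp
  then obtain v where v: "h (1, 0) v \<noteq> 0"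
    using nondegenerate unfolding nondegenerate_def by blast
  define u where "u = bscale (x / h (1, 0) v) (1, 0)"
  have "h u v = x"
    using v unfolding u_def h_scale_left by simp
  have "\<sigma> (\<sigma> x) = \<sigma> (h v u)"
    using h_swap[of v u] \<open>h u v = x\<close> by simp
  also have "\<dots> = h u v"
    using h_swap[of u v] by simp
  finally show ?thesis
    using \<open>h u v = x\<close> by simp
qed

lemma \<sigma>_eq_0_iff [simp]: "\<sigma> x = 0 \<longleftrightarrow> x = 0"
  by (metis \<sigma>_0 \<sigma>_\<sigma>)

lemma h_expand_right: "h v (x, y) = \<sigma> x * h v (1, 0) + \<sigma> y * h v (0, 1)"
proof -
  have "(x, y) = bscale x (1, 0) + bscale y (0, 1)"
    by simp
  then show ?thesis
    by (metis h_add_right h_scale_right)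
qed

lemma h_expand_left: "h (x, y) w = x * h (1, 0) w + y * h (0, 1) w"
proof -
  have "(x, y) = bscale x (1, 0) + bscale y (0, 1)"
    by simp
  then show ?thesis
    by (metis h_add_left h_scale_left)
qed

definition "h11 = h (1, 0) (1, 0)"
definition "h12 = h (1, 0) (0, 1)"
definition "h22 = h (0, 1) (0, 1)"

lemma \<sigma>_h11 [simp]: "\<sigma> h11 = h11"
  unfolding h11_def by (metis h_swap)

lemma \<sigma>_h22 [simp]: "\<sigma> h22 = h22"
  unfolding h22_def by (metis h_swap)

lemma h_Pair_Pair:
  "h (x, y) (x', y') = x * \<sigma> x' * h11 + x * \<sigma> y' * h12 + y * \<sigma> x' * \<sigma> h12 + y * \<sigma> y' * h22"
proof -
  have "h (1, 0) (x', y') = \<sigma> x' * h11 + \<sigma> y' * h12"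
    by (subst h_expand_right) (simp add: h11_def h12_def)
  moreover have "h (0, 1) (x', y') = \<sigma> x' * \<sigma> h12 + \<sigma> y' * h22"
    by (subst h_expand_right) (simp add: h12_def h22_def flip: h_swap)
  ultimately show ?thesis
    by (subst h_expand_left) (simp add: algebra_simps)
qed

lemma gram_det_nonzero: "h11 * h22 \<noteq> h12 * \<sigma> h12"
proof
  assume det: "h11 * h22 = h12 * \<sigma> h12"
  define u where "u = (if h22 = 0 then (0, 1) else (h22, - h12))"
  have "u \<noteq> 0"
    by (simp add: u_def)
  moreover have "h u w = 0" for w
  proof -
    obtain x' y' where "w = (x', y')"
      by (cases w)
    moreover have "h22 = 0 \<Longrightarrow> h12 = 0"
      using det by simp
    ultimately show ?thesis
      using det by (auto simp: u_def h_Pair_Pair algebra_simps)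
  qed
  ultimately show False
    using nondegenerate unfolding nondegenerate_def by blast
qed

text \<open>Norm and trace of GF(Q^2)/GF(Q) are surjective with fibres of size \<open>Q + 1\<close> and \<open>Q\<close>:
  their domains have exactly (number of possible values) \<open>\<times>\<close> (bound on a fibre) elements.\<close>

lemma card_norm_fiber:
  assumes "c \<noteq> 0" "\<sigma> c = c"
  shows "card {s. s ^ (Q + 1) = c} = Q + 1"
proof -
  have norm: "s ^ (Q + 1) = s * \<sigma> s" for s
    by (simp add: \<sigma>_def)
  let ?G = "UNIV - {0 :: 'b}" and ?B = "{y :: 'b. y \<noteq> 0 \<and> \<sigma> y = y}"
  have "\<sigma> (s ^ (Q + 1)) = s ^ (Q + 1)" for s
    unfolding norm by (simp only: \<sigma>_mult \<sigma>_\<sigma> mult.commute)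
  then have "(\<lambda>s. s ^ (Q + 1)) ` ?G \<subseteq> ?B"
    by auto
  moreover have "card ?B \<le> Q - 1"
  proof -
    let ?R = "{y :: 'b. y ^ Q + (-1) * y = 0}"
    have "card ?B \<le> card (?R - {0})"
      by (rule card_mono) (auto simp: \<sigma>_def)
    also have "\<dots> = card ?R - 1"
      using Q_ge_2 by (intro card_Diff_singleton) simp
    also have "\<dots> \<le> Q - 1"
      using card_roots_power_plus_linear_le[OF Q_ge_2] by (intro diff_le_mono)
    finally show ?thesis .
  qed
  moreover have "card {s \<in> ?G. s ^ (Q + 1) = b} \<le> Q + 1" for b
  proof -
    have "card {s \<in> ?G. s ^ (Q + 1) = b} \<le> card {s. s ^ (Q + 1) + 0 * s = b}"
      by (rule card_mono) auto
    also have "\<dots> \<le> Q + 1"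
      using Q_ge_2 by (intro card_roots_power_plus_linear_le) simp
    finally show ?thesis .
  qed
  moreover have "card ?G = (Q - 1) * (Q + 1)"
    using card_field Q_ge_2 by (simp add: card_Diff_singleton algebra_simps)
  ultimately have "card {s \<in> ?G. s ^ (Q + 1) = c} = Q + 1"
    using assms by (intro card_fiber_eq_if_card_domain_eq) auto
  moreover have "{s \<in> ?G. s ^ (Q + 1) = c} = {s. s ^ (Q + 1) = c}"
    using assms(1) by auto
  ultimately show ?thesis
    by simp
qed

lemma card_trace_fiber:
  assumes "\<sigma> c = c"
  shows "card {z. z + \<sigma> z = c} = Q"
proof -
  have "(\<lambda>z. z + \<sigma> z) ` UNIV \<subseteq> {y. \<sigma> y = y}"
    by (auto simp: add.commute)
  moreover have "card {y. \<sigma> y = y} \<le> Q"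
  proof -
    have "{y. \<sigma> y = y} = {y. y ^ Q + (-1) * y = 0}"
      by (auto simp: \<sigma>_def)
    then show ?thesis
      by (simp only: card_roots_power_plus_linear_le[OF Q_ge_2])
  qed
  moreover have "card {z \<in> UNIV. z + \<sigma> z = b} \<le> Q" for b
  proof -
    have "{z \<in> UNIV. z + \<sigma> z = b} = {z. z ^ Q + 1 * z = b}"
      by (auto simp: \<sigma>_def add.commute)
    then show ?thesis
      by (simp only: card_roots_power_plus_linear_le[OF Q_ge_2])
  qed
  ultimately have "card {z \<in> UNIV. z + \<sigma> z = c} = Q"
    using assms card_field by (intro card_fiber_eq_if_card_domain_eq) auto
  then show ?thesis
    by simp
qed

text \<open>For \<open>h22 \<noteq> 0\<close> the equation \<open>h (1, t) (1, t) = 0\<close> is the norm equation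
  \<open>(h22 * t + h12) ^ (Q + 1) = h12 * \<sigma> h12 - h11 * h22\<close>; for \<open>h22 = 0\<close> it is a trace equation.\<close>

lemma card_isotropic_affine_points:
  "card {t. h (1, t) (1, t) = 0} = (if h22 = 0 then Q else Q + 1)"
proof (cases "h22 = 0")
  case False
  define c where "c = h12 * \<sigma> h12 - h11 * h22"
  have "c \<noteq> 0" "\<sigma> c = c"
    using gram_det_nonzero by (auto simp: c_def mult.commute)
  have "(h22 * t + h12) ^ (Q + 1) = h22 * h (1, t) (1, t) + c" for t
    by (simp add: h_Pair_Pair c_def \<sigma>_def[symmetric] algebra_simps)
  then have "{t. h (1, t) (1, t) = 0} = {t. (h22 * t + h12) ^ (Q + 1) = c}"
    using False by auto
  also have "card \<dots> = card {s. s ^ (Q + 1) = c}"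
    using False by (rule card_Collect_affine)
  also have "\<dots> = Q + 1"
    using card_norm_fiber \<open>c \<noteq> 0\<close> \<open>\<sigma> c = c\<close> by blast
  finally show ?thesis
    using False by simp
next
  case True
  then have "h12 \<noteq> 0"
    using gram_det_nonzero by auto
  have "{t. h (1, t) (1, t) = 0} = {t. (\<sigma> h12 * t + 0) + \<sigma> (\<sigma> h12 * t + 0) = - h11}"
    using True by (auto simp: h_Pair_Pair algebra_simps eq_neg_iff_add_eq_0)
  also have "card \<dots> = card {z. z + \<sigma> z = - h11}"
    using \<open>h12 \<noteq> 0\<close> by (intro card_Collect_affine) simp
  also have "\<dots> = Q"
    by (simp add: card_trace_fiber)
  finally show ?thesis
    using True by simp
qed

definition perp :: "'b \<times> 'b \<Rightarrow> 'b \<times> 'b" where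
  "perp v = (\<sigma> (h v (0, 1)), - \<sigma> (h v (1, 0)))"

lemma perp_nonzero:
  assumes "v \<noteq> 0"
  shows "perp v \<noteq> 0"
proof
  assume "perp v = 0"
  then have "h v (1, 0) = 0" "h v (0, 1) = 0"
    by (simp_all add: perp_def)
  then have "h v (x, y) = 0" for x y
    by (subst h_expand_right) simp
  then have "h v w = 0" for w
    by (cases w) simp
  with assms show False
    using nondegenerate unfolding nondegenerate_def by blast
qed

lemma h_orthogonal_eq_kpoint:
  assumes "v \<noteq> 0"
  shows "{u. h v u = 0} = kpoint (perp v)"
proof -
  define a b where "a = \<sigma> (h v (1, 0))" and "b = \<sigma> (h v (0, 1))"
  have perp_v: "perp v = (b, - a)"
    by (simp add: perp_def a_def b_def)
  have h_v: "h v (x, y) = 0 \<longleftrightarrow> x * a + y * b = 0" for x y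
  proof -
    have "\<sigma> (h v (x, y)) = x * a + y * b"
      by (subst h_expand_right) (simp add: a_def b_def)
    then show ?thesis
      by (metis \<sigma>_eq_0_iff)
  qed
  have "a \<noteq> 0 \<or> b \<noteq> 0"
    using perp_nonzero[OF assms] perp_v by auto
  show ?thesis
  proof (intro set_eqI iffI)
    fix u
    assume "u \<in> {u. h v u = 0}"
    moreover obtain x y where u: "u = (x, y)"
      by (cases u)
    ultimately have "x * a + y * b = 0"
      using h_v by simp
    then obtain c where "x = c * b" "y = - (c * a)"
      by (rule linear_equation_solution[OF \<open>a \<noteq> 0 \<or> b \<noteq> 0\<close>])
    then have "u = bscale c (perp v)"
      by (simp add: u perp_v)
    then show "u \<in> kpoint (perp v)"
      by (auto simp: mem_kpoint_iff)
  next
    fix u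
    assume "u \<in> kpoint (perp v)"
    then obtain c where "u = (c * b, - (c * a))"
      by (auto simp: mem_kpoint_iff perp_v)
    then show "u \<in> {u. h v u = 0}"
      using h_v by (simp add: algebra_simps)
  qed
qed

end

section \<open>The trace form and its polarity\<close>

text \<open>\<open>T\<close> stands for the relative trace.\<close>

locale traced_hermitian_plane = hermitian_plane Q h
  for Q and h :: "'b::{field,finite} \<times> 'b \<Rightarrow> 'b \<times> 'b \<Rightarrow> 'b" +
  fixes T :: "'b \<Rightarrow> 'b"
  assumes T_0: "T 0 = 0"
    and T_nonzero: "\<exists>z. T z \<noteq> 0"
begin

abbreviation \<rho> :: "('b \<times> 'b) set \<Rightarrow> ('b \<times> 'b) set" where
  "\<rho> \<equiv> polar (\<lambda>u w. T (h u w))"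

definition totally_isotropic :: "('b \<times> 'b) set \<Rightarrow> bool" where
  "totally_isotropic D \<longleftrightarrow> (\<forall>u\<in>D. \<forall>w\<in>D. T (h u w) = 0)"

lemma eq_0_if_T_multiples_eq_0:
  assumes "\<forall>c. T (c * y) = 0"
  shows "y = 0"
proof (rule ccontr)
  assume "y \<noteq> 0"
  obtain z where "T z \<noteq> 0"
    using T_nonzero by blast
  moreover have "T (z / y * y) = 0"
    using assms by blast
  ultimately show False
    using \<open>y \<noteq> 0\<close> by simp
qed

lemma totally_isotropic_kpoint_iff: "totally_isotropic (kpoint v) \<longleftrightarrow> h v v = 0"
proof
  assume "totally_isotropic (kpoint v)"
  moreover have "bscale c v \<in> kpoint v" for c
    by (auto simp: mem_kpoint_iff)
  ultimately have "T (h (bscale c v) v) = 0" for c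
    unfolding totally_isotropic_def using self_in_kpoint by blast
  then show "h v v = 0"
    by (intro eq_0_if_T_multiples_eq_0) (simp add: h_scale_left)
next
  assume "h v v = 0"
  then show "totally_isotropic (kpoint v)"
    by (auto simp: totally_isotropic_def mem_kpoint_iff h_scale_left h_scale_right T_0)
qed

lemma \<rho>_kpoint: "\<rho> (kpoint v) = {u. h v u = 0}"
proof -
  have "u \<in> \<rho> (kpoint v) \<longleftrightarrow> (\<forall>c. T (h (bscale c v) u) = 0)" for u
    unfolding polar_def kpoint_def by blast
  then have "u \<in> \<rho> (kpoint v) \<longleftrightarrow> (\<forall>c. T (c * h v u) = 0)" for u
    by (simp add: h_scale_left)
  then show ?thesis
    using eq_0_if_T_multiples_eq_0 T_0 by auto
qed

lemma \<rho>_kpoint_eq_kpoint_perp: "v \<noteq> 0 \<Longrightarrow> \<rho> (kpoint v) = kpoint (perp v)"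
  by (simp add: \<rho>_kpoint h_orthogonal_eq_kpoint)

lemma non_isotropic_kpoint:
  assumes "v \<noteq> 0" "h v v \<noteq> 0"
  shows "kpoint v \<inter> \<rho> (kpoint v) = {0}"
    and "\<rho> (\<rho> (kpoint v)) = kpoint v"
    and "h (perp v) (perp v) \<noteq> 0"
proof -
  show inter: "kpoint v \<inter> \<rho> (kpoint v) = {0}"
  proof -
    have "u = 0" if u: "u \<in> kpoint v" "h v u = 0" for u
    proof -
      obtain c where "u = bscale c v"
        using u(1) by (auto simp: mem_kpoint_iff)
      with u(2) assms(2) have "c = 0"
        by (simp add: h_scale_right)
      then show ?thesis
        using \<open>u = bscale c v\<close> by (simp add: bscale_eq_0_iff)
    qed
    then show ?thesis
      unfolding \<rho>_kpoint using zero_in_kpoint h_0_right by blast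
  qed
  define w where "w = perp v"
  have "w \<noteq> 0"
    using perp_nonzero[OF assms(1)] by (simp add: w_def)
  have \<rho>_v: "\<rho> (kpoint v) = kpoint w"
    using \<rho>_kpoint_eq_kpoint_perp[OF assms(1)] by (simp add: w_def)
  have "h w v = 0"
    using \<rho>_v \<rho>_kpoint[of v] h_swap[of w v] self_in_kpoint[of w] by auto
  then have "v \<in> \<rho> (kpoint w)"
    by (simp add: \<rho>_kpoint)
  then show \<rho>\<rho>: "\<rho> (\<rho> (kpoint v)) = kpoint v"
    using kpoint_eq_if_mem[OF assms(1)] \<rho>_kpoint_eq_kpoint_perp[OF \<open>w \<noteq> 0\<close>] \<rho>_v by simp
  show "h (perp v) (perp v) \<noteq> 0"
  proof
    assume "h (perp v) (perp v) = 0"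
    then have "w \<in> \<rho> (kpoint w)"
      by (simp add: \<rho>_kpoint w_def)
    then have "w \<in> kpoint v \<inter> \<rho> (kpoint v)"
      using \<rho>\<rho> \<rho>_v by simp
    with inter \<open>w \<noteq> 0\<close> show False
      by blast
  qed
qed

lemma non_isotropic_point_polar:
  assumes "D \<in> desarguesian_spread" "\<not> totally_isotropic D"
  shows "\<rho> D \<in> desarguesian_spread"
    and "\<not> totally_isotropic (\<rho> D)"
    and "D \<inter> \<rho> D = {0}"
    and "\<rho> (\<rho> D) = D"
    and "\<rho> D \<noteq> D"
proof -
  obtain v where v: "v \<noteq> 0" "D = kpoint v"
    using assms(1) by (auto simp: desarguesian_spread_def)
  have "h v v \<noteq> 0"
    using assms(2) v(2) by (simp add: totally_isotropic_kpoint_iff)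
  show "\<rho> D \<in> desarguesian_spread"
    using v \<rho>_kpoint_eq_kpoint_perp perp_nonzero by (simp add: desarguesian_spread_def)
  show "\<not> totally_isotropic (\<rho> D)"
    using v non_isotropic_kpoint(3)[OF v(1) \<open>h v v \<noteq> 0\<close>]
    by (simp add: \<rho>_kpoint_eq_kpoint_perp totally_isotropic_kpoint_iff)
  show inter: "D \<inter> \<rho> D = {0}"
    using v non_isotropic_kpoint(1)[OF v(1) \<open>h v v \<noteq> 0\<close>] by simp
  show "\<rho> (\<rho> D) = D"
    using v non_isotropic_kpoint(2)[OF v(1) \<open>h v v \<noteq> 0\<close>] by simp
  show "\<rho> D \<noteq> D"
    using inter v self_in_kpoint[of v] by auto
qed

lemma card_totally_isotropic_points:
  "card {D \<in> desarguesian_spread. totally_isotropic D} = Q + 1"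
proof -
  let ?A = "(\<lambda>t. kpoint (1, t)) ` {t. h (1, t) (1, t) = 0}"
  have "card ?A = card {t. h (1, t) (1, t) = 0}"
    by (rule card_image) (rule inj_on_subset[OF inj_kpoint_1], simp)
  moreover have "kpoint (0, 1) \<notin> ?A"
    using kpoint_0_1_notin_range by blast
  moreover have "{D \<in> desarguesian_spread. totally_isotropic D}
      = (if h22 = 0 then insert (kpoint (0, 1)) ?A else ?A)"
    unfolding desarguesian_spread_eq
    by (auto simp: totally_isotropic_kpoint_iff h22_def)
  ultimately show ?thesis
    using card_isotropic_affine_points by simp
qed

lemma card_non_isotropic_points:
  "card {D \<in> desarguesian_spread. \<not> totally_isotropic D} = Q * Q - Q"
proof -
  have "{D \<in> desarguesian_spread. \<not> totally_isotropic D}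
      = desarguesian_spread - {D \<in> desarguesian_spread. totally_isotropic D}"
    by blast
  then show ?thesis
    using card_totally_isotropic_points card_desarguesian_spread[where 'b = 'b] card_field
    by (simp add: card_Diff_subset)
qed

lemma card_polar_pairs:
  "card {{D, \<rho> D} | D. D \<in> desarguesian_spread \<and> \<not> totally_isotropic D} = (Q * Q - Q) div 2"
  using card_pairs_of_involution[of "{D \<in> desarguesian_spread. \<not> totally_isotropic D}" \<rho>]
    non_isotropic_point_polar card_non_isotropic_points by simp

end

lemma traced_hermitian_plane_rel_trace:
  fixes h :: "'b::{field,finite} \<times> 'b \<Rightarrow> 'b \<times> 'b \<Rightarrow> 'b"
  assumes "m \<ge> 1" "prime p" "k \<ge> 1" "q = p ^ k"
    and "card (UNIV :: 'b set) = q ^ (4*m - 2)"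
    and "hermitian_form (\<lambda>x. x ^ (q ^ (2*m - 1))) h" "nondegenerate h"
  shows "traced_hermitian_plane (q ^ (2*m - 1)) h (rel_trace q m)"
proof -
  have "2 \<le> q"
    using assms(2-4) by (metis order.trans power_increasing power_one_right prime_ge_1_nat prime_ge_2_nat)
  have "4*m - 2 = (2*m - 1) + (2*m - 1)"
    using assms(1) by simp
  then have "card (UNIV :: 'b set) = q ^ (2*m - 1) * q ^ (2*m - 1)"
    by (simp only: assms(5) power_add)
  moreover have "(x + y) ^ (q ^ (2*m - 1)) = x ^ (q ^ (2*m - 1)) + y ^ (q ^ (2*m - 1))" for x y :: 'b
    using power_prime_power_add[OF assms(2), of "k * (4*m - 2)" x y "k * (2*m - 1)"] assms(4,5)
    by (simp add: power_mult)
  moreover obtain z :: 'b where "rel_trace q m z \<noteq> 0"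
    using rel_trace_nonzero \<open>2 \<le> q\<close> assms(1,5) by blast
  ultimately show ?thesis
    using assms(6,7) \<open>2 \<le> q\<close> by unfold_locales (auto simp: rel_trace_0)
qed

theorem mainTheorem13:
  fixes m q p k :: nat
    and emb :: "'a::{field,finite} \<Rightarrow> 'b::{field,finite}"
    and h :: "'b \<times> 'b \<Rightarrow> 'b \<times> 'b \<Rightarrow> 'b"
  assumes "m \<ge> 1"
    and "prime p" and "k \<ge> 1" and "q = p ^ k"
    and "card (UNIV :: 'a set) = q ^ 2"
    and "card (UNIV :: 'b set) = q ^ (4*m - 2)"
    and "field_embedding emb"
    and "hermitian_form (\<lambda>x. x ^ (q ^ (2*m - 1))) h"
    and "nondegenerate h"
  shows "\<exists>S. is_spread (sc emb) (2*m - 2) S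
     \<and> card {D\<in>S. is_generator (sc emb) (\<lambda>u v. rel_trace q m (h u v)) (2*m - 2) D}
         = q ^ (2*m - 1) + 1
     \<and> card {D\<in>S. \<not> is_generator (sc emb) (\<lambda>u v. rel_trace q m (h u v)) (2*m - 2) D}
         = q ^ (4*m - 2) - q ^ (2*m - 1)
     \<and> (\<forall>D\<in>S. \<not> is_generator (sc emb) (\<lambda>u v. rel_trace q m (h u v)) (2*m - 2) D \<longrightarrow>
           polar (\<lambda>u v. rel_trace q m (h u v)) D \<in> S
         \<and> D \<inter> polar (\<lambda>u v. rel_trace q m (h u v)) D = {0})
     \<and> card {{D, polar (\<lambda>u v. rel_trace q m (h u v)) D} | D.
               D \<in> S \<and> \<not> is_generator (sc emb) (\<lambda>u v. rel_trace q m (h u v)) (2*m - 2) D}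
         = (q ^ (4*m - 2) - q ^ (2*m - 1)) div 2"
proof -
  interpret traced_hermitian_plane "q ^ (2*m - 1)" h "rel_trace q m"
    using traced_hermitian_plane_rel_trace[OF assms(1-4,6,8,9)] .
  have "4*m - 2 = 2 * (2*m - 2 + 1)"
    using assms(1) by simp
  then have "card (UNIV :: 'b set) = card (UNIV :: 'a set) ^ (2*m - 2 + 1)"
    by (simp only: assms(5,6) power_mult)
  then have spread: "is_spread (sc emb) (2*m - 2) desarguesian_spread"
    by (rule is_spread_desarguesian_spread[OF assms(7)])
  then have "is_generator (sc emb) (\<lambda>u v. rel_trace q m (h u v)) (2*m - 2) D
      \<longleftrightarrow> totally_isotropic D" if "D \<in> desarguesian_spread" for D
    using that unfolding is_generator_def totally_isotropic_def is_spread_def by blast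
  moreover have "q ^ (4*m - 2) = q ^ (2*m - 1) * q ^ (2*m - 1)"
    using card_field assms(6) by simp
  ultimately show ?thesis
    using spread card_totally_isotropic_points card_non_isotropic_points card_polar_pairs
      non_isotropic_point_polar(1,3)
    by (intro exI[of _ desarguesian_spread]) (simp cong: conj_cong)
qed

end
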